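(* (1) If two triangles $I_1,I_2$ intersect, then there is a triangle $I$ with $\mathrm{span}(I)=\mathrm{span}(I_1)+\mathrm{span}(I_2)$ containing $I_1\cup I_2$. (2) If $A_1,A_2\subseteq\mathbb{Z}^2$ are such that some point of $A_1$ is a neighbor in $\mathbf{G}$ of some point of $A_2$, and $A_j\subseteq D(I_j,1/3)$ for triangles $I_j$ ($j=1,2$), then there is a triangle $I$ with $\mathrm{span}(I)=\mathrm{span}(I_1)+\mathrm{span}(I_2)$ such that $A_1\cup A_2\subseteq D(I,1/3)$.
   Context: For real numbers $a,b,c$, the triangle $L(a,b,c)$ is $\{(x,y)\in\mathbb{R}^2 : -x\le a,\ -y\le b,\ x+y\le c\}$; its span is $\mathrm{span}(L(a,b,c))=a+b+c$. The deflation of $I=L(a,b,c)$ by $d$ is $D(I,d)=L(a-d,b-d,c-d)$. The graph $\mathbf{G}$ on $\mathbb{Z}^2$ joins each point $p$ to $p\pm(1,0)$, $p\pm(0,1)$, $p+(-1,1)$, $p+(1,-1)$. *)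

theory Defs
  imports Complex_Main
begin

definition tri :: "real \<Rightarrow> real \<Rightarrow> real \<Rightarrow> (real \<times> real) set" where
  "tri a b c = {(x, y). - x \<le> a \<and> - y \<le> b \<and> x + y \<le> c}"

definition tri_span :: "real \<Rightarrow> real \<Rightarrow> real \<Rightarrow> real" where
  "tri_span a b c = a + b + c"

definition deflate :: "real \<Rightarrow> real \<Rightarrow> real \<Rightarrow> real \<Rightarrow> (real \<times> real) set" where
  "deflate a b c d = tri (a - d) (b - d) (c - d)"

definition G_adj :: "int \<times> int \<Rightarrow> int \<times> int \<Rightarrow> bool" where
  "G_adj p q \<longleftrightarrow> (fst q - fst p, snd q - snd p) \<in> {(1,0), (-1,0), (0,1), (0,-1), (-1,1), (1,-1)}"

definition emb :: "int \<times> int \<Rightarrow> real \<times> real" where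
  "emb p = (real_of_int (fst p), real_of_int (snd p))"

end

theory Submission
  imports Defs
begin

text \<open>The intersection of two triangles is the triangle of the coordinatewise minima of their
  parameters, and L(a,b,c) is nonempty iff its span is nonnegative. So if L(a1,b1,c1) and
  L(a2,b2,c2) meet, the sum s of the minima is nonnegative, and L(max a_i + s, max b_i, max c_i)
  contains both, and its deflation contains both deflations; its span is the sum of the maxima
  plus the sum of the minima, i.e. the sum of the two spans. For (2) it remains to see that the
  undeflated triangles meet as soon as their deflations by 1/3 contain two neighbouring points.\<close>

lemma tri_mono: "a \<le> a' \<Longrightarrow> b \<le> b' \<Longrightarrow> c \<le> c' \<Longrightarrow> tri a b c \<subseteq> tri a' b' c'"
  unfolding tri_def by auto

lemma deflate_mono:
  "a \<le> a' \<Longrightarrow> b \<le> b' \<Longrightarrow> c \<le> c' \<Longrightarrow> deflate a b c d \<subseteq> deflate a' b' c' d"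
  unfolding deflate_def by (rule tri_mono) simp_all

lemma tri_Int: "tri a1 b1 c1 \<inter> tri a2 b2 c2 = tri (min a1 a2) (min b1 b2) (min c1 c2)"
  unfolding tri_def by auto

lemma tri_nonempty_iff: "tri a b c \<noteq> {} \<longleftrightarrow> 0 \<le> tri_span a b c"
proof
  assume "tri a b c \<noteq> {}"
  then show "0 \<le> tri_span a b c"
    unfolding tri_def tri_span_def by auto
next
  assume "0 \<le> tri_span a b c"
  then have "(- a, - b) \<in> tri a b c"
    unfolding tri_def tri_span_def by simp
  then show "tri a b c \<noteq> {}" by blast
qed

lemma tri_Int_nonempty_iff:
  "tri a1 b1 c1 \<inter> tri a2 b2 c2 \<noteq> {} \<longleftrightarrow> 0 \<le> min a1 a2 + min b1 b2 + min c1 c2"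
  by (simp add: tri_Int tri_nonempty_iff tri_span_def)

lemma tri_span_merge:
  fixes a1 b1 c1 a2 b2 c2 :: real
  assumes "tri a1 b1 c1 \<inter> tri a2 b2 c2 \<noteq> {}"
  obtains a b c where "tri_span a b c = tri_span a1 b1 c1 + tri_span a2 b2 c2"
    and "a1 \<le> a" "a2 \<le> a" "b1 \<le> b" "b2 \<le> b" "c1 \<le> c" "c2 \<le> c"
proof -
  define s where "s = min a1 a2 + min b1 b2 + min c1 c2"
  have "0 \<le> s"
    using assms unfolding s_def tri_Int_nonempty_iff .
  then show thesis
    by (intro that[of "max a1 a2 + s" "max b1 b2" "max c1 c2"])
      (auto simp: s_def tri_span_def max_def min_def)
qed

text \<open>In the coordinates (-x, -y, x + y), which sum to 0, a step of G adds a permutation of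
  (1, -1, 0). Hence the coordinatewise minima for p and q sum to -1, and the minima of the
  parameters sum to at least 3d - 1; this is why the deflation is by 1/3.\<close>

lemma G_adj_deflate_tri_Int:
  assumes "G_adj p q" "1/3 \<le> d"
    and "emb p \<in> deflate a1 b1 c1 d" "emb q \<in> deflate a2 b2 c2 d"
  shows "tri a1 b1 c1 \<inter> tri a2 b2 c2 \<noteq> {}"
proof -
  obtain p1 p2 q1 q2 where pq: "p = (p1, p2)" "q = (q1, q2)"
    by fastforce
  have "(q1 = p1 + 1 \<and> q2 = p2) \<or> (q1 = p1 - 1 \<and> q2 = p2) \<or> (q1 = p1 \<and> q2 = p2 + 1) \<or>
      (q1 = p1 \<and> q2 = p2 - 1) \<or> (q1 = p1 - 1 \<and> q2 = p2 + 1) \<or> (q1 = p1 + 1 \<and> q2 = p2 - 1)"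
    using assms(1) unfolding pq G_adj_def by auto
  then show ?thesis
    using assms(2-4) unfolding tri_Int_nonempty_iff unfolding pq deflate_def tri_def emb_def
    by (auto simp: min_def)
qed

theorem lemma2p2:
  shows "(\<forall>a1 b1 c1 a2 b2 c2 :: real.
            tri a1 b1 c1 \<inter> tri a2 b2 c2 \<noteq> {} \<longrightarrow>
            (\<exists>a b c. tri_span a b c = tri_span a1 b1 c1 + tri_span a2 b2 c2 \<and>
                     tri a1 b1 c1 \<union> tri a2 b2 c2 \<subseteq> tri a b c))
       \<and> (\<forall>(A1 :: (int \<times> int) set) (A2 :: (int \<times> int) set) (a1 :: real) b1 c1 a2 b2 c2.
            (\<exists>p\<in>A1. \<exists>q\<in>A2. G_adj p q) \<longrightarrow>
            emb ` A1 \<subseteq> deflate a1 b1 c1 (1/3) \<longrightarrow>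
            emb ` A2 \<subseteq> deflate a2 b2 c2 (1/3) \<longrightarrow>
            (\<exists>a b c. tri_span a b c = tri_span a1 b1 c1 + tri_span a2 b2 c2 \<and>
                     emb ` (A1 \<union> A2) \<subseteq> deflate a b c (1/3)))"
proof (intro conjI allI impI)
  fix a1 b1 c1 a2 b2 c2 :: real
  assume "tri a1 b1 c1 \<inter> tri a2 b2 c2 \<noteq> {}"
  then obtain a b c where "tri_span a b c = tri_span a1 b1 c1 + tri_span a2 b2 c2"
    and "a1 \<le> a" "a2 \<le> a" "b1 \<le> b" "b2 \<le> b" "c1 \<le> c" "c2 \<le> c"
    by (rule tri_span_merge)
  then show "\<exists>a b c. tri_span a b c = tri_span a1 b1 c1 + tri_span a2 b2 c2 \<and>
      tri a1 b1 c1 \<union> tri a2 b2 c2 \<subseteq> tri a b c"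
    using tri_mono by blast
next
  fix A1 A2 :: "(int \<times> int) set" and a1 b1 c1 a2 b2 c2 :: real
  assume "\<exists>p\<in>A1. \<exists>q\<in>A2. G_adj p q"
    and A1: "emb ` A1 \<subseteq> deflate a1 b1 c1 (1/3)" and A2: "emb ` A2 \<subseteq> deflate a2 b2 c2 (1/3)"
  then have "tri a1 b1 c1 \<inter> tri a2 b2 c2 \<noteq> {}"
    using G_adj_deflate_tri_Int[of _ _ "1/3"] by fastforce
  then obtain a b c where "tri_span a b c = tri_span a1 b1 c1 + tri_span a2 b2 c2"
    and "a1 \<le> a" "a2 \<le> a" "b1 \<le> b" "b2 \<le> b" "c1 \<le> c" "c2 \<le> c"
    by (rule tri_span_merge)
  moreover from this have "emb ` (A1 \<union> A2) \<subseteq> deflate a b c (1/3)"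
    using A1 A2 deflate_mono[of a1 a b1 b c1 c "1/3"] deflate_mono[of a2 a b2 b c2 c "1/3"]
    by (auto simp: image_Un)
  ultimately show "\<exists>a b c. tri_span a b c = tri_span a1 b1 c1 + tri_span a2 b2 c2 \<and>
      emb ` (A1 \<union> A2) \<subseteq> deflate a b c (1/3)"
    by blast
qed

end
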